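(* For every positive integer $n$, $D''_n\equiv 0\pmod 3$.
   Context: For $n\in\mathbb{N}$, the Domb numbers are $D_n=\sum_{k=0}^n\binom{n}{k}^2\binom{2k}{k}\binom{2(n-k)}{n-k}$. For a sequence $(x_k)_{k\ge0}$, its binomial transform is $x'_n=\sum_{k=0}^n\binom{n}{k}x_k$; $D'_n=\sum_{k=0}^n\binom nk D_k$ and $D''_n=\sum_{k=0}^n\binom{n}{k}D'_k$. *)

theory Defs
  imports Main
begin

definition domb :: "nat \<Rightarrow> nat" where
  "domb n = (\<Sum>k=0..n. (n choose k)^2 * ((2*k) choose k) * ((2*(n-k)) choose (n-k)))"

definition binom_transform :: "(nat \<Rightarrow> nat) \<Rightarrow> nat \<Rightarrow> nat" where
  "binom_transform x n = (\<Sum>k=0..n. (n choose k) * x k)"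

definition domb' :: "nat \<Rightarrow> nat" where
  "domb' = binom_transform domb"

definition domb'' :: "nat \<Rightarrow> nat" where
  "domb'' = binom_transform domb'"

end

theory Submission
  imports Defs
begin

text \<open>
  Reducing modulo 3, the binomial transform sends a sequence congruent to c^n to one
  congruent to (c+1)^n, so it suffices that every Domb number is congruent to 1.
  Expanding the central binomial coefficients by Vandermonde, D_n is the sum of the
  squared multinomial coefficients (n; a, b, c, d) over all compositions of n into four
  parts. Rotating the last three parts is a symmetry of order 3 of this sum, so modulo 3
  only its fixed points (a, j, j, j) count; among them only (n, 0, 0, 0) contributes,
  since for j > 0 the factor (3j choose j) is divisible by 3.
\<close>

lemma sum_mod_3_eq_sum_fixed_points:
  fixes r :: "'a \<Rightarrow> 'a" and g :: "'a \<Rightarrow> nat"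
  assumes "finite A" "r ` A \<subseteq> A" "\<forall>x\<in>A. r (r (r x)) = x" "\<forall>x\<in>A. g (r x) = g x"
  shows "sum g A mod 3 = sum g {x\<in>A. r x = x} mod 3"
  using assms
proof (induction "card A" arbitrary: A rule: less_induct)
  case less
  show ?case
  proof (cases "\<forall>x\<in>A. r x = x")
    case True
    then have "{x\<in>A. r x = x} = A" by blast
    then show ?thesis by simp
  next
    case False
    then obtain x where x: "x \<in> A" "r x \<noteq> x" by blast
    define orb where "orb = {x, r x, r (r x)}"
    have r3: "r (r (r y)) = y" if "y \<in> A" for y using less.prems(3) that by blast
    have orb_A: "orb \<subseteq> A" using x less.prems(2) by (auto simp: orb_def)
    have no_fixed: "r y \<noteq> y" if "y \<in> orb" for y
      using that x r3[of x] by (auto simp: orb_def)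
    have orb_sum: "sum g orb = 3 * g x"
    proof -
      have "r x \<noteq> x" "r (r x) \<noteq> r x" using no_fixed by (auto simp: orb_def)
      moreover have "r (r x) \<noteq> x" using x r3 by metis
      moreover have "g (r x) = g x" "g (r (r x)) = g x"
        using x less.prems(2,4) by auto
      ultimately show ?thesis by (simp add: orb_def)
    qed
    define B where "B = A - orb"
    have orb_closed: "r y \<in> orb" if "y \<in> orb" for y
      using that x r3 by (auto simp: orb_def)
    have "r ` B \<subseteq> B"
    proof
      fix z assume "z \<in> r ` B"
      then obtain y where y: "y \<in> B" "z = r y" by blast
      have "y \<in> A" "y \<notin> orb" using y B_def by auto
      then have "r y \<notin> orb" using orb_closed r3 by metis
      then show "z \<in> B" using y less.prems(2) by (auto simp: B_def)
    qed
    moreover have "card B < card A"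
      using x orb_A less.prems(1) by (auto simp: B_def orb_def intro!: psubset_card_mono)
    ultimately have "sum g B mod 3 = sum g {y\<in>B. r y = y} mod 3"
      using less.hyps less.prems by (simp add: B_def)
    moreover have "{y\<in>B. r y = y} = {y\<in>A. r y = y}"
      using no_fixed by (auto simp: B_def)
    moreover have "sum g A = sum g orb + sum g B"
      using sum.subset_diff[OF orb_A less.prems(1)] by (simp add: B_def add.commute)
    ultimately show ?thesis using orb_sum by simp
  qed
qed

definition multinomial4 :: "nat \<Rightarrow> nat \<Rightarrow> nat \<Rightarrow> nat \<Rightarrow> nat" where
  "multinomial4 a b c d = ((a+b+c+d) choose a) * ((b+c+d) choose b) * ((c+d) choose c)"

lemma multinomial4_fact:
  "multinomial4 a b c d * (fact a * fact b * fact c * fact d) = fact (a+b+c+d)"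
proof -
  have "fact a * fact (b+c+d) * ((a+b+c+d) choose a) = fact (a+b+c+d)"
    using binomial_fact_lemma[of a "a+b+c+d"] by (simp add: add.assoc)
  moreover have "fact b * fact (c+d) * ((b+c+d) choose b) = fact (b+c+d)"
    using binomial_fact_lemma[of b "b+c+d"] by (simp add: add.assoc)
  moreover have "fact c * fact d * ((c+d) choose c) = fact (c+d)"
    using binomial_fact_lemma[of c "c+d"] by simp
  ultimately show ?thesis
    unfolding multinomial4_def by (metis (no_types, lifting) mult.commute mult.left_commute)
qed

lemma multinomial4_rotate: "multinomial4 a b c d = multinomial4 a c d b"
proof -
  have "multinomial4 a b c d * (fact a * fact b * fact c * fact d)
      = multinomial4 a c d b * (fact a * fact b * fact c * fact d)"
    using multinomial4_fact[of a b c d] multinomial4_fact[of a c d b] by (simp add: ac_simps)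
  then show ?thesis by simp
qed

lemma multinomial4_choose:
  assumes "k \<le> n" "i \<le> k" "j \<le> n - k"
  shows "(n choose k) * (k choose i) * ((n-k) choose j) = multinomial4 i (k-i) j (n-k-j)"
proof -
  have "(n choose k) * (k choose i) = (n choose i) * ((n-i) choose (k-i))"
    using choose_mult assms by blast
  moreover have "i + (k-i) + j + (n-k-j) = n" "k - i + j + (n-k-j) = n - i" "j + (n-k-j) = n - k"
    using assms by auto
  ultimately show ?thesis
    unfolding multinomial4_def by (simp add: add.assoc)
qed

lemma three_dvd_multinomial4:
  assumes "j > 0"
  shows "3 dvd multinomial4 a j j j"
proof -
  have "j * ((3*j) choose j) = 3 * j * ((3*j - 1) choose (j - 1))"
    by (rule times_binomial_minus1_eq[OF assms])
  then have "(3*j) choose j = 3 * ((3*j - 1) choose (j - 1))"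
    using assms by simp
  then have "3 dvd ((3*j) choose j)" by simp
  moreover have "j + j + j = 3 * j" by simp
  ultimately show ?thesis
    unfolding multinomial4_def by (metis dvd_mult dvd_mult2)
qed

lemma domb_eq_sum_multinomial4:
  "domb n = (\<Sum>(k,i,j) \<in> Sigma {..n} (\<lambda>k. {..k} \<times> {..n-k}). multinomial4 i (k-i) j (n-k-j)^2)"
proof -
  have "(n choose k)^2 * ((2*k) choose k) * ((2*(n-k)) choose (n-k))
      = (\<Sum>i\<le>k. \<Sum>j\<le>n-k. multinomial4 i (k-i) j (n-k-j)^2)" if "k \<le> n" for k
  proof -
    have "(n choose k)^2 * ((2*k) choose k) * ((2*(n-k)) choose (n-k))
        = (n choose k)^2 * (\<Sum>i\<le>k. (k choose i)^2) * (\<Sum>j\<le>n-k. ((n-k) choose j)^2)"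
      by (simp add: choose_square_sum)
    also have "\<dots> = (\<Sum>i\<le>k. \<Sum>j\<le>n-k. ((n choose k) * (k choose i) * ((n-k) choose j))^2)"
      by (simp add: sum_distrib_left sum_distrib_right power_mult_distrib ac_simps)
    also have "\<dots> = (\<Sum>i\<le>k. \<Sum>j\<le>n-k. multinomial4 i (k-i) j (n-k-j)^2)"
      using that by (intro sum.cong refl) (simp add: multinomial4_choose)
    finally show ?thesis .
  qed
  then show ?thesis
    unfolding domb_def by (simp add: atLeast0AtMost sum.Sigma)
qed

lemma domb_mod_3: "domb n mod 3 = 1"
proof -
  define T where "T = Sigma {..n} (\<lambda>k. {..k} \<times> {..n-k})"
  define g where "g = (\<lambda>(k,i,j). multinomial4 i (k-i) j (n-k-j)^2)"
  \<comment> \<open>(k, i, j) encodes the composition (i, k-i, j, n-k-j); r rotates its last three parts.\<close>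
  define r where "r = (\<lambda>(k::nat,i::nat,j::nat). (i+j, i, n-k-j))"
  have mem_T: "(k,i,j) \<in> T \<longleftrightarrow> k \<le> n \<and> i \<le> k \<and> j \<le> n-k" for k i j
    by (auto simp: T_def)
  have "g (r x) = g x" if "x \<in> T" for x
  proof -
    obtain k i j where x: "x = (k,i,j)" "k \<le> n" "i \<le> k" "j \<le> n-k"
      using \<open>x \<in> T\<close> mem_T by (cases x) auto
    then have "g (r x) = multinomial4 i j (n-k-j) (k-i)^2"
      by (simp add: g_def r_def)
    also have "\<dots> = g x"
      using x by (simp add: g_def multinomial4_rotate[of i "k-i"])
    finally show ?thesis .
  qed
  moreover have "r ` T \<subseteq> T" "\<forall>x\<in>T. r (r (r x)) = x"
    by (auto simp: r_def mem_T)
  ultimately have "sum g T mod 3 = sum g {x\<in>T. r x = x} mod 3"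
    by (intro sum_mod_3_eq_sum_fixed_points) (auto simp: T_def)
  also have "\<dots> = 1"
  proof -
    define F where "F = {x\<in>T. r x = x}"
    have "3 dvd g x" if "x \<in> F - {(n,n,0)}" for x
    proof -
      obtain k i j where x: "x = (k,i,j)" by (cases x)
      with that have "k \<le> n" "j \<le> n-k" "i + j = k" "n-k-j = j"
        by (auto simp: F_def r_def mem_T)
      then have parts: "k = i + j" "n = i + 3*j" by auto
      have "j > 0"
        using that x parts by (auto intro: Nat.gr0I)
      moreover have "g x = multinomial4 i j j j ^ 2"
        using x parts by (simp add: g_def)
      ultimately show ?thesis by (simp add: three_dvd_multinomial4 power2_eq_square)
    qed
    then have "3 dvd sum g (F - {(n,n,0)})" by (rule dvd_sum)
    moreover have "sum g F = g (n,n,0) + sum g (F - {(n,n,0)})"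
      by (rule sum.remove) (auto simp: F_def r_def mem_T T_def)
    moreover have "g (n,n,0) = 1"
      by (simp add: g_def multinomial4_def)
    ultimately show ?thesis
      unfolding F_def[symmetric] by (elim dvdE) simp
  qed
  finally show ?thesis
    by (simp add: domb_eq_sum_multinomial4 T_def g_def)
qed

lemma binom_transform_mod_pow:
  assumes "\<And>k. x k mod m = c^k mod m"
  shows "binom_transform x n mod m = (c+1)^n mod m"
proof -
  have "binom_transform x n mod m = (\<Sum>k\<le>n. (n choose k) * x k mod m) mod m"
    unfolding binom_transform_def atLeast0AtMost by (rule mod_sum_eq[symmetric])
  also have "\<dots> = (\<Sum>k\<le>n. (n choose k) * c^k mod m) mod m"
  proof -
    have "(n choose k) * x k mod m = (n choose k) * c^k mod m" for k
      by (metis assms mod_mult_right_eq)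
    then show ?thesis by (simp only:)
  qed
  also have "\<dots> = (\<Sum>k\<le>n. (n choose k) * c^k) mod m"
    by (rule mod_sum_eq)
  also have "\<dots> = (c+1)^n mod m"
    using binomial[of c 1 n] by simp
  finally show ?thesis .
qed

theorem lemma3p4:
  fixes n :: nat
  assumes "n > 0"
  shows "domb'' n mod 3 = 0"
proof -
  have "domb' k mod 3 = 2^k mod 3" for k
    using binom_transform_mod_pow[of domb 3 1] domb_mod_3 by (simp add: domb'_def numeral_2_eq_2)
  then have "domb'' n mod 3 = 3^n mod 3"
    using binom_transform_mod_pow[of domb' 3 2] by (simp add: domb''_def)
  then show ?thesis using assms by simp
qed

end
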